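(* Let $\mathcal{H},\mathcal{K}$ be finite-dimensional Hilbert spaces and $\Gamma:\mathcal{B}(\mathcal{H})\to\mathcal{B}(\mathcal{K})$ a completely positive trace-preserving map. Suppose there exist a completely positive map $\mathcal{F}:\mathcal{B}(\mathcal{H})\to\mathcal{B}(\mathcal{K})$ and a real number $\epsilon>0$ such that for every density operator $\rho$ on $\mathcal{H}$, $\epsilon\le\operatorname{tr}[\mathcal{F}(\rho)]$ and $\mathcal{F}(\rho)=\operatorname{tr}[\mathcal{F}(\rho)]\,\Gamma(\rho)$. Then either $\Gamma(\cdot)=\rho'\operatorname{tr}[\cdot]$ for some density operator $\rho'$ on $\mathcal{K}$, or $\Gamma=\mathcal{F}/p$ for some positive number $p$. *)

theory Defs
  imports Complex_Main "Jordan_Normal_Form.Matrix"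
begin

text \<open>Operators on a finite-dimensional Hilbert space C^n are represented as complex
  n x n matrices (elements of carrier_mat n n). A map B(C^n) -> B(C^m) is a function on
  matrices; only its behaviour on carrier_mat n n matters.\<close>

definition mtrace :: "complex mat \<Rightarrow> complex" where
  "mtrace A = (\<Sum>i<dim_row A. A $$ (i, i))"

definition psd :: "nat \<Rightarrow> complex mat \<Rightarrow> bool" where
  "psd n A \<longleftrightarrow> A \<in> carrier_mat n n \<and>
     (\<forall>v \<in> carrier_vec n. Im (conjugate v \<bullet> (A *\<^sub>v v)) = 0 \<and> 0 \<le> Re (conjugate v \<bullet> (A *\<^sub>v v)))"

definition density :: "nat \<Rightarrow> complex mat \<Rightarrow> bool" where
  "density n \<rho> \<longleftrightarrow> psd n \<rho> \<and> mtrace \<rho> = 1"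

definition linear_map_mat :: "nat \<Rightarrow> nat \<Rightarrow> (complex mat \<Rightarrow> complex mat) \<Rightarrow> bool" where
  "linear_map_mat n m \<Phi> \<longleftrightarrow>
     (\<forall>A \<in> carrier_mat n n. \<Phi> A \<in> carrier_mat m m) \<and>
     (\<forall>A \<in> carrier_mat n n. \<forall>B \<in> carrier_mat n n. \<Phi> (A + B) = \<Phi> A + \<Phi> B) \<and>
     (\<forall>A \<in> carrier_mat n n. \<forall>c. \<Phi> (c \<cdot>\<^sub>m A) = c \<cdot>\<^sub>m \<Phi> A)"

text \<open>(id_k \<otimes> \<Phi>) applied to a k x k block matrix with n x n blocks
  (block (a,b) of X occupies rows a*n.., columns b*n..).\<close>
definition ampliate :: "nat \<Rightarrow> nat \<Rightarrow> nat \<Rightarrow> (complex mat \<Rightarrow> complex mat) \<Rightarrow> complex mat \<Rightarrow> complex mat" where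
  "ampliate k n m \<Phi> X = mat (k * m) (k * m) (\<lambda>(i, j).
      \<Phi> (mat n n (\<lambda>(r, s). X $$ ((i div m) * n + r, (j div m) * n + s))) $$ (i mod m, j mod m))"

definition completely_positive :: "nat \<Rightarrow> nat \<Rightarrow> (complex mat \<Rightarrow> complex mat) \<Rightarrow> bool" where
  "completely_positive n m \<Phi> \<longleftrightarrow> linear_map_mat n m \<Phi> \<and>
     (\<forall>k. \<forall>X. psd (k * n) X \<longrightarrow> psd (k * m) (ampliate k n m \<Phi> X))"

definition trace_preserving :: "nat \<Rightarrow> (complex mat \<Rightarrow> complex mat) \<Rightarrow> bool" where
  "trace_preserving n \<Phi> \<longleftrightarrow> (\<forall>A \<in> carrier_mat n n. mtrace (\<Phi> A) = mtrace A)"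

end

theory Submission
  imports Defs
begin

text \<open>Apply the hypothesis F \<rho> = tr (F \<rho>) \<cdot> \<Gamma> \<rho> at the midpoint of two density operators \<rho>, \<sigma>
  and compare it, using linearity, with the average of its instances at \<rho> and \<sigma>: this gives
  (tr F \<rho> - tr F \<sigma>) \<cdot> (\<Gamma> \<rho> - \<Gamma> \<sigma>) = 0. So either tr F takes a single value p on density
  operators, and then \<Gamma> = F/p on them, or it takes two different values, and then \<Gamma> is constant
  on density operators, i.e. \<Gamma> \<rho> = tr \<rho> \<cdot> \<rho>' there. Both identities extend to all matrices, because
  density operators span them: by polarization, already the normalized rank-one projections do.\<close>

lemma conjugate_scalar_prod_mult_mat_vec:
  assumes "A \<in> carrier_mat n n" "v \<in> carrier_vec n"
  shows "conjugate v \<bullet> (A *\<^sub>v v) = (\<Sum>i<n. \<Sum>j<n. cnj (v $ i) * A $$ (i, j) * v $ j)"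
  using assms
  by (auto simp: atLeast0LessThan sum_distrib_left mult.assoc scalar_prod_def intro!: sum.cong)

lemma psd_carrier: "psd n A \<Longrightarrow> A \<in> carrier_mat n n"
  unfolding psd_def by simp

lemma psd_add:
  assumes "psd n A" "psd n B"
  shows "psd n (A + B)"
proof -
  have c: "A \<in> carrier_mat n n" "B \<in> carrier_mat n n" using assms by (auto intro: psd_carrier)
  have "conjugate v \<bullet> ((A + B) *\<^sub>v v) = conjugate v \<bullet> (A *\<^sub>v v) + conjugate v \<bullet> (B *\<^sub>v v)"
    if "v \<in> carrier_vec n" for v
    using that c by (simp add: conjugate_scalar_prod_mult_mat_vec[of _ n] sum.distrib[symmetric] distrib_left distrib_right)
  then show ?thesis using assms c unfolding psd_def by auto
qed

lemma psd_smult: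
  assumes "psd n A" "0 \<le> c"
  shows "psd n (complex_of_real c \<cdot>\<^sub>m A)"
proof -
  have c: "A \<in> carrier_mat n n" using assms by (auto intro: psd_carrier)
  have "conjugate v \<bullet> ((complex_of_real c \<cdot>\<^sub>m A) *\<^sub>v v) = complex_of_real c * (conjugate v \<bullet> (A *\<^sub>v v))"
    if "v \<in> carrier_vec n" for v
    using that c by (simp add: conjugate_scalar_prod_mult_mat_vec[of _ n] sum_distrib_left mult.assoc mult.left_commute)
  then show ?thesis using assms c unfolding psd_def by auto
qed

lemma psd_diag:
  assumes "psd n A" "i < n"
  shows "Im (A $$ (i, i)) = 0 \<and> 0 \<le> Re (A $$ (i, i))"
proof -
  have "conjugate (unit_vec n i) \<bullet> (A *\<^sub>v unit_vec n i) = A $$ (i, i)"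
    using assms psd_carrier[OF assms(1)]
    by (simp add: conjugate_scalar_prod_mult_mat_vec[of _ n] if_distrib[of cnj] if_distrib[of "\<lambda>x. _ * x"]
        if_distrib[of "\<lambda>x. x * _"] sum.delta cong: if_cong)
  then show ?thesis using assms unfolding psd_def by (metis unit_vec_carrier)
qed

lemma psd_mtrace_real:
  assumes "psd n A"
  shows "Im (mtrace A) = 0"
proof -
  have "dim_row A = n" using psd_carrier[OF assms] by simp
  then show ?thesis using psd_diag[OF assms] by (simp add: mtrace_def)
qed

lemma mtrace_add: "A \<in> carrier_mat n n \<Longrightarrow> B \<in> carrier_mat n n \<Longrightarrow> mtrace (A + B) = mtrace A + mtrace B"
  unfolding mtrace_def by (auto simp: sum.distrib)

lemma mtrace_smult: "A \<in> carrier_mat n n \<Longrightarrow> mtrace (c \<cdot>\<^sub>m A) = c * mtrace A"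
  unfolding mtrace_def by (auto simp: sum_distrib_left)

lemma density_carrier: "density n \<rho> \<Longrightarrow> \<rho> \<in> carrier_mat n n"
  unfolding density_def by (simp add: psd_carrier)

lemma density_midpoint:
  assumes "density n \<rho>" "density n \<sigma>"
  shows "density n ((1/2) \<cdot>\<^sub>m (\<rho> + \<sigma>))"
proof -
  have "psd n (complex_of_real (1/2) \<cdot>\<^sub>m (\<rho> + \<sigma>))"
    using assms unfolding density_def by (intro psd_smult psd_add) auto
  moreover have "mtrace ((1/2) \<cdot>\<^sub>m (\<rho> + \<sigma>)) = 1"
    using assms by (simp add: density_carrier mtrace_smult[of _ n] mtrace_add[of _ n] density_def)
  ultimately show ?thesis unfolding density_def by simp
qed

definition outer_mat :: "nat \<Rightarrow> (nat \<Rightarrow> complex) \<Rightarrow> (nat \<Rightarrow> complex) \<Rightarrow> complex mat" where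
  "outer_mat n f g = mat n n (\<lambda>(i, j). f i * cnj (g j))"

lemma outer_mat_carrier [simp]: "outer_mat n f g \<in> carrier_mat n n"
  unfolding outer_mat_def by simp

lemma dim_outer_mat [simp]: "dim_row (outer_mat n f g) = n" "dim_col (outer_mat n f g) = n"
  unfolding outer_mat_def by simp_all

lemma index_outer_mat [simp]: "i < n \<Longrightarrow> j < n \<Longrightarrow> outer_mat n f g $$ (i, j) = f i * cnj (g j)"
  unfolding outer_mat_def by simp

lemma outer_mat_polarization:
  "outer_mat n f g = (1/4) \<cdot>\<^sub>m
     ((outer_mat n (\<lambda>i. f i + g i) (\<lambda>i. f i + g i) + (-1) \<cdot>\<^sub>m outer_mat n (\<lambda>i. f i - g i) (\<lambda>i. f i - g i))
    + (\<i> \<cdot>\<^sub>m outer_mat n (\<lambda>i. f i + \<i> * g i) (\<lambda>i. f i + \<i> * g i)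
       + (-\<i>) \<cdot>\<^sub>m outer_mat n (\<lambda>i. f i - \<i> * g i) (\<lambda>i. f i - \<i> * g i)))"
  by (rule eq_matI) (auto simp: algebra_simps)

lemma psd_outer_mat: "psd n (outer_mat n f f)"
proof -
  have "conjugate v \<bullet> (outer_mat n f f *\<^sub>v v) = complex_of_real ((cmod (\<Sum>j<n. cnj (f j) * v $ j))\<^sup>2)"
    if "v \<in> carrier_vec n" for v
  proof -
    have "conjugate v \<bullet> (outer_mat n f f *\<^sub>v v) = (\<Sum>i<n. \<Sum>j<n. (cnj (v $ i) * f i) * (cnj (f j) * v $ j))"
      using that by (auto simp: conjugate_scalar_prod_mult_mat_vec[of _ n] ac_simps intro!: sum.cong)
    also have "\<dots> = cnj (\<Sum>j<n. cnj (f j) * v $ j) * (\<Sum>j<n. cnj (f j) * v $ j)"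
      by (simp add: sum_product mult.commute)
    finally show ?thesis by (metis complex_norm_square mult.commute)
  qed
  then show ?thesis unfolding psd_def by simp
qed

lemma mtrace_outer_mat: "mtrace (outer_mat n f f) = complex_of_real (\<Sum>i<n. (cmod (f i))\<^sup>2)"
  unfolding mtrace_def outer_mat_def by (auto simp: complex_norm_square[symmetric] intro!: sum.cong)

lemma density_normalized_outer_mat:
  assumes "(\<Sum>i<n. (cmod (f i))\<^sup>2) > 0"
  shows "density n (complex_of_real (1 / (\<Sum>i<n. (cmod (f i))\<^sup>2)) \<cdot>\<^sub>m outer_mat n f f)"
proof -
  define N where "N = (\<Sum>i<n. (cmod (f i))\<^sup>2)"
  have "psd n (complex_of_real (1 / N) \<cdot>\<^sub>m outer_mat n f f)"
    using assms unfolding N_def by (intro psd_smult psd_outer_mat) simp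
  moreover have "mtrace (complex_of_real (1 / N) \<cdot>\<^sub>m outer_mat n f f) = 1"
    using assms unfolding mtrace_smult[OF outer_mat_carrier] mtrace_outer_mat N_def[symmetric]
    by (simp add: of_real_mult[symmetric] del: of_real_mult of_real_divide)
  ultimately show ?thesis unfolding density_def N_def by blast
qed

lemma linear_map_mat_carrier: "linear_map_mat n m \<Phi> \<Longrightarrow> A \<in> carrier_mat n n \<Longrightarrow> \<Phi> A \<in> carrier_mat m m"
  unfolding linear_map_mat_def by auto

lemma linear_map_mat_add:
  "linear_map_mat n m \<Phi> \<Longrightarrow> A \<in> carrier_mat n n \<Longrightarrow> B \<in> carrier_mat n n \<Longrightarrow> \<Phi> (A + B) = \<Phi> A + \<Phi> B"
  unfolding linear_map_mat_def by auto

lemma linear_map_mat_smult: "linear_map_mat n m \<Phi> \<Longrightarrow> A \<in> carrier_mat n n \<Longrightarrow> \<Phi> (c \<cdot>\<^sub>m A) = c \<cdot>\<^sub>m \<Phi> A"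
  unfolding linear_map_mat_def by auto

lemma zero_smult_carrier_mat: "A \<in> carrier_mat n m \<Longrightarrow> (0 :: 'a :: mult_zero) \<cdot>\<^sub>m A = 0\<^sub>m n m"
  by (rule eq_matI) auto

lemma linear_map_mat_zero:
  assumes "linear_map_mat n m \<Phi>"
  shows "\<Phi> (0\<^sub>m n n) = 0\<^sub>m m m"
proof -
  have "\<Phi> (0\<^sub>m n n) = \<Phi> (0 \<cdot>\<^sub>m 0\<^sub>m n n)" by simp
  also have "\<dots> = 0 \<cdot>\<^sub>m \<Phi> (0\<^sub>m n n)" by (rule linear_map_mat_smult[OF assms zero_carrier_mat])
  also have "\<dots> = 0\<^sub>m m m" using assms by (simp add: linear_map_mat_carrier zero_smult_carrier_mat)
  finally show ?thesis .
qed

lemma linear_map_mat_scaled: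
  assumes "linear_map_mat n m \<Phi>"
  shows "linear_map_mat n m (\<lambda>A. c \<cdot>\<^sub>m \<Phi> A)"
  unfolding linear_map_mat_def
proof (intro conjI ballI allI)
  fix A B :: "complex mat" assume A: "A \<in> carrier_mat n n" and B: "B \<in> carrier_mat n n"
  show "c \<cdot>\<^sub>m \<Phi> (A + B) = c \<cdot>\<^sub>m \<Phi> A + c \<cdot>\<^sub>m \<Phi> B"
    using A B assms linear_map_mat_carrier[OF assms]
    by (simp add: linear_map_mat_add add_smult_distrib_left_mat[of _ m m])
next
  fix A :: "complex mat" and d assume A: "A \<in> carrier_mat n n"
  show "c \<cdot>\<^sub>m \<Phi> (d \<cdot>\<^sub>m A) = d \<cdot>\<^sub>m (c \<cdot>\<^sub>m \<Phi> A)"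
    using A assms linear_map_mat_carrier[OF assms A] by (auto simp: linear_map_mat_smult intro!: eq_matI)
qed (use assms linear_map_mat_carrier in auto)

lemma linear_map_mat_mtrace_times:
  assumes "r \<in> carrier_mat m m"
  shows "linear_map_mat n m (\<lambda>A. mtrace A \<cdot>\<^sub>m r)"
  using assms unfolding linear_map_mat_def
  by (auto simp: mtrace_add[of _ n] mtrace_smult[of _ n] add_smult_distrib_right_mat)

lemma linear_map_mat_eq_on_outer_mat:
  assumes \<Phi>: "linear_map_mat n m \<Phi>" and \<Psi>: "linear_map_mat n m \<Psi>"
    and eq: "\<And>\<rho>. density n \<rho> \<Longrightarrow> \<Phi> \<rho> = \<Psi> \<rho>"
  shows "\<Phi> (outer_mat n f f) = \<Psi> (outer_mat n f f)"
proof (cases "(\<Sum>i<n. (cmod (f i))\<^sup>2) > 0")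
  case True
  define N where "N = (\<Sum>i<n. (cmod (f i))\<^sup>2)"
  define \<rho> where "\<rho> = complex_of_real (1 / N) \<cdot>\<^sub>m outer_mat n f f"
  have "density n \<rho>" unfolding \<rho>_def N_def by (rule density_normalized_outer_mat[OF True])
  moreover have "outer_mat n f f = complex_of_real N \<cdot>\<^sub>m \<rho>"
    using True unfolding \<rho>_def N_def[symmetric] by (intro eq_matI) auto
  ultimately show ?thesis
    using linear_map_mat_smult[OF \<Phi>] linear_map_mat_smult[OF \<Psi>] density_carrier eq by metis
next
  case False
  then have "(\<Sum>i<n. (cmod (f i))\<^sup>2) = 0" by (metis less_eq_real_def sum_nonneg zero_le_power2)
  then have "\<forall>i<n. f i = 0" by (simp add: sum_nonneg_eq_0_iff)
  then have "outer_mat n f f = 0\<^sub>m n n" by (intro eq_matI) auto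
  then show ?thesis using linear_map_mat_zero[OF \<Phi>] linear_map_mat_zero[OF \<Psi>] by simp
qed

text \<open>A matrix is the sum over k of outer_mat n (its k-th column) (the k-th unit vector).\<close>

lemma linear_map_mat_eq_on_density:
  assumes \<Phi>: "linear_map_mat n m \<Phi>" and \<Psi>: "linear_map_mat n m \<Psi>"
    and eq: "\<And>\<rho>. density n \<rho> \<Longrightarrow> \<Phi> \<rho> = \<Psi> \<rho>"
    and A: "A \<in> carrier_mat n n"
  shows "\<Phi> A = \<Psi> A"
proof -
  have outer: "\<Phi> (outer_mat n f g) = \<Psi> (outer_mat n f g)" for f g
    by (subst (1 2) outer_mat_polarization)
      (simp add: linear_map_mat_add[OF \<Phi>] linear_map_mat_add[OF \<Psi>] linear_map_mat_smult[OF \<Phi>]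
        linear_map_mat_smult[OF \<Psi>] linear_map_mat_eq_on_outer_mat[OF \<Phi> \<Psi> eq])
  define cols where "cols k = mat n n (\<lambda>(r, s). if s < k then A $$ (r, s) else 0)" for k
  have cols_carrier: "cols k \<in> carrier_mat n n" for k unfolding cols_def by simp
  have "\<Phi> (cols k) = \<Psi> (cols k)" for k
  proof (induction k)
    case 0
    have "cols 0 = 0\<^sub>m n n" unfolding cols_def by (intro eq_matI) auto
    then show ?case using linear_map_mat_zero[OF \<Phi>] linear_map_mat_zero[OF \<Psi>] by simp
  next
    case (Suc k)
    have "cols (Suc k) = cols k + outer_mat n (\<lambda>r. A $$ (r, k)) (\<lambda>s. if s = k then 1 else 0)"
      unfolding cols_def by (intro eq_matI) (auto simp: less_Suc_eq)
    then show ?case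
      using Suc linear_map_mat_add[OF \<Phi> cols_carrier] linear_map_mat_add[OF \<Psi> cols_carrier] outer by simp
  qed
  moreover have "cols n = A" unfolding cols_def using A by (intro eq_matI) auto
  ultimately show ?thesis by metis
qed

lemma completely_positive_imp_psd:
  assumes "completely_positive n m \<Phi>" "psd n X"
  shows "psd m (\<Phi> X)"
proof -
  have lin: "linear_map_mat n m \<Phi>" using assms(1) unfolding completely_positive_def by simp
  have X: "X \<in> carrier_mat n n" using psd_carrier[OF assms(2)] .
  have "mat n n (\<lambda>(r, s). X $$ (r, s)) = X" using X by (intro eq_matI) auto
  then have "ampliate 1 n m \<Phi> X = \<Phi> X"
    unfolding ampliate_def using linear_map_mat_carrier[OF lin X] by (intro eq_matI) auto
  moreover have "psd (1 * m) (ampliate 1 n m \<Phi> X)"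
    using assms unfolding completely_positive_def by (metis mult_1)
  ultimately show ?thesis by simp
qed

lemma average_of_products_eq_product_of_averages:
  fixes a b x y :: "'a :: field_char_0"
  assumes "(a * x + b * y) / 2 = (a + b) / 2 * ((x + y) / 2)"
  shows "(a - b) * (x - y) = 0"
proof -
  have "(a - b) * (x - y) = 4 * ((a * x + b * y) / 2 - (a + b) / 2 * ((x + y) / 2))"
    by (simp add: field_simps)
  then show ?thesis using assms by simp
qed

lemma proportional_on_density_image_eq_or_mtrace_eq:
  assumes \<Gamma>: "linear_map_mat n m \<Gamma>" and F: "linear_map_mat n m F"
    and proportional: "\<And>\<rho>. density n \<rho> \<Longrightarrow> F \<rho> = mtrace (F \<rho>) \<cdot>\<^sub>m \<Gamma> \<rho>"
    and \<rho>: "density n \<rho>" and \<sigma>: "density n \<sigma>"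
  shows "\<Gamma> \<rho> = \<Gamma> \<sigma> \<or> mtrace (F \<rho>) = mtrace (F \<sigma>)"
proof (rule disjCI)
  assume ne: "mtrace (F \<rho>) \<noteq> mtrace (F \<sigma>)"
  define \<mu> where "\<mu> = (1/2) \<cdot>\<^sub>m (\<rho> + \<sigma>)"
  have \<rho>\<sigma>: "\<rho> \<in> carrier_mat n n" "\<sigma> \<in> carrier_mat n n" using \<rho> \<sigma> by (auto intro: density_carrier)
  have \<Gamma>\<rho>\<sigma>: "\<Gamma> \<rho> \<in> carrier_mat m m" "\<Gamma> \<sigma> \<in> carrier_mat m m"
    using \<rho>\<sigma> by (auto intro: linear_map_mat_carrier[OF \<Gamma>])
  have F\<rho>\<sigma>: "F \<rho> \<in> carrier_mat m m" "F \<sigma> \<in> carrier_mat m m"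
    using \<rho>\<sigma> by (auto intro: linear_map_mat_carrier[OF F])
  have \<Gamma>\<mu>: "\<Gamma> \<mu> = (1/2) \<cdot>\<^sub>m (\<Gamma> \<rho> + \<Gamma> \<sigma>)" and F\<mu>: "F \<mu> = (1/2) \<cdot>\<^sub>m (F \<rho> + F \<sigma>)"
    unfolding \<mu>_def using \<rho>\<sigma> by (simp_all add: linear_map_mat_smult[OF \<Gamma>] linear_map_mat_add[OF \<Gamma>]
      linear_map_mat_smult[OF F] linear_map_mat_add[OF F])
  have tr\<mu>: "mtrace (F \<mu>) = (1/2) * (mtrace (F \<rho>) + mtrace (F \<sigma>))"
    unfolding F\<mu> using F\<rho>\<sigma> by (simp add: mtrace_smult[of _ m] mtrace_add[of _ m])
  have proportional\<mu>: "F \<mu> = mtrace (F \<mu>) \<cdot>\<^sub>m \<Gamma> \<mu>" using proportional \<rho> \<sigma> density_midpoint unfolding \<mu>_def by blast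
  show "\<Gamma> \<rho> = \<Gamma> \<sigma>"
  proof (rule eq_matI)
    fix i j assume "i < dim_row (\<Gamma> \<sigma>)" "j < dim_col (\<Gamma> \<sigma>)"
    then have ij: "i < m" "j < m" using \<Gamma>\<rho>\<sigma> by auto
    let ?a = "mtrace (F \<rho>)" and ?b = "mtrace (F \<sigma>)" and ?x = "\<Gamma> \<rho> $$ (i, j)" and ?y = "\<Gamma> \<sigma> $$ (i, j)"
    have "F \<rho> $$ (i, j) = ?a * ?x" "F \<sigma> $$ (i, j) = ?b * ?y"
      using proportional[OF \<rho>] proportional[OF \<sigma>] ij \<Gamma>\<rho>\<sigma> by (metis carrier_matD index_smult_mat(1))+
    then have "(?a * ?x + ?b * ?y) / 2 = (?a + ?b) / 2 * ((?x + ?y) / 2)"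
      using arg_cong[OF proportional\<mu>, of "\<lambda>M. M $$ (i, j)"] tr\<mu> ij \<Gamma>\<rho>\<sigma> F\<rho>\<sigma> unfolding \<Gamma>\<mu> F\<mu> by simp
    then have "(?a - ?b) * (?x - ?y) = 0" by (rule average_of_products_eq_product_of_averages)
    then show "?x = ?y" using ne by simp
  qed (use \<Gamma>\<rho>\<sigma> in auto)
qed

lemma proportional_on_density_mtrace_const_or_image_const:
  assumes \<Gamma>: "linear_map_mat n m \<Gamma>" and F: "linear_map_mat n m F"
    and proportional: "\<And>\<rho>. density n \<rho> \<Longrightarrow> F \<rho> = mtrace (F \<rho>) \<cdot>\<^sub>m \<Gamma> \<rho>"
  shows "(\<forall>\<rho> \<sigma>. density n \<rho> \<longrightarrow> density n \<sigma> \<longrightarrow> mtrace (F \<rho>) = mtrace (F \<sigma>))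
    \<or> (\<exists>\<rho>\<^sub>0. density n \<rho>\<^sub>0 \<and> (\<forall>\<rho>. density n \<rho> \<longrightarrow> \<Gamma> \<rho> = \<Gamma> \<rho>\<^sub>0))"
proof (rule disjCI)
  assume "\<not> (\<exists>\<rho>\<^sub>0. density n \<rho>\<^sub>0 \<and> (\<forall>\<rho>. density n \<rho> \<longrightarrow> \<Gamma> \<rho> = \<Gamma> \<rho>\<^sub>0))"
  have dichotomy: "\<Gamma> \<rho> = \<Gamma> \<sigma> \<or> mtrace (F \<rho>) = mtrace (F \<sigma>)"
    if "density n \<rho>" "density n \<sigma>" for \<rho> \<sigma>
    by (rule proportional_on_density_image_eq_or_mtrace_eq[OF \<Gamma> F proportional that])
  show "\<forall>\<rho> \<sigma>. density n \<rho> \<longrightarrow> density n \<sigma> \<longrightarrow> mtrace (F \<rho>) = mtrace (F \<sigma>)"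
  proof (rule ccontr)
    assume "\<not> ?thesis"
    then obtain \<rho>\<^sub>1 \<sigma>\<^sub>1 where \<rho>\<^sub>1: "density n \<rho>\<^sub>1" and \<sigma>\<^sub>1: "density n \<sigma>\<^sub>1"
      and ne: "mtrace (F \<rho>\<^sub>1) \<noteq> mtrace (F \<sigma>\<^sub>1)" by blast
    have "\<Gamma> \<rho> = \<Gamma> \<rho>\<^sub>1" if "density n \<rho>" for \<rho>
      using dichotomy[OF that \<rho>\<^sub>1] dichotomy[OF that \<sigma>\<^sub>1] dichotomy[OF \<rho>\<^sub>1 \<sigma>\<^sub>1] ne by metis
    with \<open>\<not> (\<exists>\<rho>\<^sub>0. _)\<close> \<rho>\<^sub>1 show False by blast
  qed
qed

lemma constant_mtrace_on_density_real:
  assumes psd: "\<And>\<rho>. density n \<rho> \<Longrightarrow> psd m (F \<rho>)"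
    and pos: "\<And>\<rho>. density n \<rho> \<Longrightarrow> 0 < Re (mtrace (F \<rho>))"
    and const: "\<And>\<rho> \<sigma>. density n \<rho> \<Longrightarrow> density n \<sigma> \<Longrightarrow> mtrace (F \<rho>) = mtrace (F \<sigma>)"
  obtains p :: real where "p > 0" "\<And>\<rho>. density n \<rho> \<Longrightarrow> mtrace (F \<rho>) = complex_of_real p"
proof (cases "\<exists>\<rho>\<^sub>0. density n \<rho>\<^sub>0")
  case True
  then obtain \<rho>\<^sub>0 where \<rho>\<^sub>0: "density n \<rho>\<^sub>0" by blast
  have "mtrace (F \<rho>\<^sub>0) = complex_of_real (Re (mtrace (F \<rho>\<^sub>0)))"
    using psd_mtrace_real[OF psd[OF \<rho>\<^sub>0]] by (simp add: complex_eq_iff)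
  then show ?thesis using that pos[OF \<rho>\<^sub>0] const[OF _ \<rho>\<^sub>0] by metis
next
  case False
  show ?thesis by (rule that[of 1]) (use False in auto)
qed

lemma eq_scaled_of_proportional_on_density:
  assumes \<Gamma>: "linear_map_mat n m \<Gamma>" and F: "linear_map_mat n m F" and "p \<noteq> 0"
    and proportional: "\<And>\<rho>. density n \<rho> \<Longrightarrow> F \<rho> = mtrace (F \<rho>) \<cdot>\<^sub>m \<Gamma> \<rho>"
    and tr: "\<And>\<rho>. density n \<rho> \<Longrightarrow> mtrace (F \<rho>) = complex_of_real p"
    and A: "A \<in> carrier_mat n n"
  shows "\<Gamma> A = complex_of_real (1 / p) \<cdot>\<^sub>m F A"
proof (rule linear_map_mat_eq_on_density[OF \<Gamma> linear_map_mat_scaled[OF F] _ A])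
  fix \<rho> assume \<rho>: "density n \<rho>"
  show "\<Gamma> \<rho> = complex_of_real (1 / p) \<cdot>\<^sub>m F \<rho>"
    using proportional[OF \<rho>] tr[OF \<rho>] \<open>p \<noteq> 0\<close> linear_map_mat_carrier[OF \<Gamma> density_carrier[OF \<rho>]]
    by (auto intro!: eq_matI)
qed

lemma replacement_channel_of_const_on_density:
  assumes cp: "completely_positive n m \<Gamma>" and tp: "trace_preserving n \<Gamma>"
    and \<rho>\<^sub>0: "density n \<rho>\<^sub>0" and const: "\<And>\<rho>. density n \<rho> \<Longrightarrow> \<Gamma> \<rho> = \<Gamma> \<rho>\<^sub>0"
  shows "density m (\<Gamma> \<rho>\<^sub>0)" and "\<And>A. A \<in> carrier_mat n n \<Longrightarrow> \<Gamma> A = mtrace A \<cdot>\<^sub>m \<Gamma> \<rho>\<^sub>0"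
proof -
  have \<Gamma>: "linear_map_mat n m \<Gamma>" using cp unfolding completely_positive_def by simp
  have \<Gamma>\<rho>\<^sub>0: "\<Gamma> \<rho>\<^sub>0 \<in> carrier_mat m m" using linear_map_mat_carrier[OF \<Gamma> density_carrier[OF \<rho>\<^sub>0]] .
  show "density m (\<Gamma> \<rho>\<^sub>0)"
    using \<rho>\<^sub>0 tp completely_positive_imp_psd[OF cp] density_carrier[OF \<rho>\<^sub>0]
    unfolding density_def trace_preserving_def by simp
  fix A :: "complex mat" assume A: "A \<in> carrier_mat n n"
  show "\<Gamma> A = mtrace A \<cdot>\<^sub>m \<Gamma> \<rho>\<^sub>0"
  proof (rule linear_map_mat_eq_on_density[OF \<Gamma> linear_map_mat_mtrace_times[OF \<Gamma>\<rho>\<^sub>0] _ A])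
    fix \<rho> assume "density n \<rho>"
    then show "\<Gamma> \<rho> = mtrace \<rho> \<cdot>\<^sub>m \<Gamma> \<rho>\<^sub>0"
      using const \<Gamma>\<rho>\<^sub>0 by (auto simp: density_def intro!: eq_matI)
  qed
qed

theorem lemma3:
  fixes n m :: nat and \<Gamma> F :: "complex mat \<Rightarrow> complex mat" and \<epsilon> :: real
  assumes "completely_positive n m \<Gamma>" and "trace_preserving n \<Gamma>"
    and "completely_positive n m F" and "\<epsilon> > 0"
    and "\<forall>\<rho>. density n \<rho> \<longrightarrow>
           \<epsilon> \<le> Re (mtrace (F \<rho>)) \<and> F \<rho> = mtrace (F \<rho>) \<cdot>\<^sub>m \<Gamma> \<rho>"
  shows "(\<exists>\<rho>'. density m \<rho>' \<and> (\<forall>A \<in> carrier_mat n n. \<Gamma> A = mtrace A \<cdot>\<^sub>m \<rho>'))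
       \<or> (\<exists>p::real. p > 0 \<and> (\<forall>A \<in> carrier_mat n n. \<Gamma> A = complex_of_real (1 / p) \<cdot>\<^sub>m F A))"
proof -
  have \<Gamma>: "linear_map_mat n m \<Gamma>" and F: "linear_map_mat n m F"
    using assms(1,3) unfolding completely_positive_def by simp_all
  have proportional: "\<And>\<rho>. density n \<rho> \<Longrightarrow> F \<rho> = mtrace (F \<rho>) \<cdot>\<^sub>m \<Gamma> \<rho>" using assms(5) by blast
  consider (mtrace_const) "\<forall>\<rho> \<sigma>. density n \<rho> \<longrightarrow> density n \<sigma> \<longrightarrow> mtrace (F \<rho>) = mtrace (F \<sigma>)"
    | (image_const) \<rho>\<^sub>0 where "density n \<rho>\<^sub>0" "\<forall>\<rho>. density n \<rho> \<longrightarrow> \<Gamma> \<rho> = \<Gamma> \<rho>\<^sub>0"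
    using proportional_on_density_mtrace_const_or_image_const[OF \<Gamma> F proportional] by blast
  then show ?thesis
  proof cases
    case mtrace_const
    have "psd m (F \<rho>)" "0 < Re (mtrace (F \<rho>))" if "density n \<rho>" for \<rho>
      using completely_positive_imp_psd[OF assms(3)] assms(4,5) that unfolding density_def by fastforce+
    then obtain p where "p > 0" and "\<And>\<rho>. density n \<rho> \<Longrightarrow> mtrace (F \<rho>) = complex_of_real p"
      using constant_mtrace_on_density_real[of n m F] mtrace_const by metis
    then show ?thesis using eq_scaled_of_proportional_on_density[OF \<Gamma> F _ proportional] by force
  next
    case image_const
    then show ?thesis using replacement_channel_of_const_on_density[OF assms(1,2)] by blast
  qed
qed

end
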